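(* Let $k$ be a field, $\Gamma=(V,E)$ a finite connected quiver, and let $I\subseteq R^2$ be an ideal of $k\Gamma$ generated by paths such that $k\Gamma/I$ is complete and acyclic. Then $\dim_k HH^1(k\Gamma/I)=|\overline{\mathfrak{B}}_2|+1-|V|$, where $\overline{\mathfrak{B}}_2=\{\overline{D}_{r,\overline{s}}\mid r\in E,\ \overline{s}\in\mathscr{Q},\ r\parallel\overline{s}\}$.
   Context: For a path $p$, $t(p),h(p)$ are its start and end vertex; paths multiply by left-to-right concatenation (product $0$ if they do not concatenate). $R$ is the ideal generated by $E$, $\overline{x}=x+I$. $\mathscr{Q}$ is the set of residue classes of paths not in $I$ (a $k$-basis of $k\Gamma/I$); for $\overline{s}\in\mathscr{Q}$ the class of $s\notin I$, $t(\overline{s})=t(s)$, $h(\overline{s})=h(s)$, and $r\parallel\overline{s}$ means $t(r)=t(s)$, $h(r)=h(s)$. $k\Gamma/I$ is complete if for any two parallel paths $p,p'$, $p\in I$ implies $p'\in I$; it is acyclic if every path $p\notin I$ with $t(p)=h(p)$ is a vertex. $HH^1(k\Gamma/I)$ is the space of derivations of $k\Gamma/I$ modulo inner derivations. $\overline{D}_{r,\overline{s}}$ is the derivation of $k\Gamma/I$ induced by the unique $k$-linear map $D_{r,\overline{s}}:k\Gamma\to k\Gamma/I$ satisfying $D(xy)=D(x)\overline{y}+\overline{x}D(y)$, $D_{r,\overline{s}}(r)=\overline{s}$, and vanishing on all other arrows and vertices (this map vanishes on $I$ under the completeness hypothesis). *)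

theory Defs
  imports Main HOL.Vector_Spaces "HOL-Library.Function_Algebras"
begin

(* A path of the quiver (V,E,src,tgt): a start vertex together with a list of
   composable arrows (left-to-right). (v,[]) is the trivial path e_v. *)
type_synonym ('v,'e) qpath = "'v \<times> 'e list"

(* elements of k Gamma / I are represented by their coefficient functions on paths *)
type_synonym ('v,'e,'k) qmap = "(('v,'e) qpath \<Rightarrow> 'k) \<Rightarrow> (('v,'e) qpath \<Rightarrow> 'k)"

definition is_path :: "'v set \<Rightarrow> 'e set \<Rightarrow> ('e \<Rightarrow> 'v) \<Rightarrow> ('e \<Rightarrow> 'v) \<Rightarrow> ('v,'e) qpath \<Rightarrow> bool" where
  "is_path V E src tgt p \<longleftrightarrow> fst p \<in> V \<and> set (snd p) \<subseteq> E \<and>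
     (snd p \<noteq> [] \<longrightarrow> src (hd (snd p)) = fst p) \<and>
     (\<forall>i. Suc i < length (snd p) \<longrightarrow> tgt (snd p ! i) = src (snd p ! Suc i))"

definition pstart :: "('v,'e) qpath \<Rightarrow> 'v" where
  "pstart p = fst p"

definition pend :: "('e \<Rightarrow> 'v) \<Rightarrow> ('v,'e) qpath \<Rightarrow> 'v" where
  "pend tgt p = (if snd p = [] then fst p else tgt (last (snd p)))"

definition pconcat :: "('v,'e) qpath \<Rightarrow> ('v,'e) qpath \<Rightarrow> ('v,'e) qpath" where
  "pconcat p q = (fst p, snd p @ snd q)"

definition plen :: "('v,'e) qpath \<Rightarrow> nat" where
  "plen p = length (snd p)"

definition pfx :: "nat \<Rightarrow> ('v,'e) qpath \<Rightarrow> ('v,'e) qpath" where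
  "pfx i p = (fst p, take i (snd p))"

definition sfx :: "('e \<Rightarrow> 'v) \<Rightarrow> nat \<Rightarrow> ('v,'e) qpath \<Rightarrow> ('v,'e) qpath" where
  "sfx tgt i p = (if i = 0 then fst p else tgt (snd p ! (i - 1)), drop i (snd p))"

definition vpath :: "'v \<Rightarrow> ('v,'e) qpath" where
  "vpath v = (v, [])"

definition apath :: "('e \<Rightarrow> 'v) \<Rightarrow> 'e \<Rightarrow> ('v,'e) qpath" where
  "apath src e = (src e, [e])"

definition finite_quiver :: "'v set \<Rightarrow> 'e set \<Rightarrow> ('e \<Rightarrow> 'v) \<Rightarrow> ('e \<Rightarrow> 'v) \<Rightarrow> bool" where
  "finite_quiver V E src tgt \<longleftrightarrow> finite V \<and> finite E \<and> (\<forall>e\<in>E. src e \<in> V \<and> tgt e \<in> V)"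

definition connected_quiver :: "'v set \<Rightarrow> 'e set \<Rightarrow> ('e \<Rightarrow> 'v) \<Rightarrow> ('e \<Rightarrow> 'v) \<Rightarrow> bool" where
  "connected_quiver V E src tgt \<longleftrightarrow> V \<noteq> {} \<and>
     (\<forall>u\<in>V. \<forall>w\<in>V. (u, w) \<in> ({(src e, tgt e) | e. e \<in> E} \<union> {(tgt e, src e) | e. e \<in> E})\<^sup>*)"

(* An ideal I of k Gamma generated by paths is determined by the set Ip of paths lying in I
   (I = span Ip, Ip closed under left/right multiplication by paths).
   I \<subseteq> R^2 means every path in I has length at least 2. *)
definition path_ideal_in_R2 :: "'v set \<Rightarrow> 'e set \<Rightarrow> ('e \<Rightarrow> 'v) \<Rightarrow> ('e \<Rightarrow> 'v) \<Rightarrow> ('v,'e) qpath set \<Rightarrow> bool" where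
  "path_ideal_in_R2 V E src tgt Ip \<longleftrightarrow>
     Ip \<subseteq> {p. is_path V E src tgt p} \<and>
     (\<forall>p\<in>Ip. 2 \<le> plen p) \<and>
     (\<forall>p\<in>Ip. \<forall>q. is_path V E src tgt q \<and> pend tgt q = pstart p \<longrightarrow> pconcat q p \<in> Ip) \<and>
     (\<forall>p\<in>Ip. \<forall>q. is_path V E src tgt q \<and> pend tgt p = pstart q \<longrightarrow> pconcat p q \<in> Ip)"

definition complete_alg :: "'v set \<Rightarrow> 'e set \<Rightarrow> ('e \<Rightarrow> 'v) \<Rightarrow> ('e \<Rightarrow> 'v) \<Rightarrow> ('v,'e) qpath set \<Rightarrow> bool" where
  "complete_alg V E src tgt Ip \<longleftrightarrow>
     (\<forall>p p'. is_path V E src tgt p \<and> is_path V E src tgt p' \<and>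
        pstart p = pstart p' \<and> pend tgt p = pend tgt p' \<and> p \<in> Ip \<longrightarrow> p' \<in> Ip)"

definition acyclic_alg :: "'v set \<Rightarrow> 'e set \<Rightarrow> ('e \<Rightarrow> 'v) \<Rightarrow> ('e \<Rightarrow> 'v) \<Rightarrow> ('v,'e) qpath set \<Rightarrow> bool" where
  "acyclic_alg V E src tgt Ip \<longleftrightarrow>
     (\<forall>p. is_path V E src tgt p \<and> p \<notin> Ip \<and> pstart p = pend tgt p \<longrightarrow> snd p = [])"

definition Qset :: "'v set \<Rightarrow> 'e set \<Rightarrow> ('e \<Rightarrow> 'v) \<Rightarrow> ('e \<Rightarrow> 'v) \<Rightarrow> ('v,'e) qpath set \<Rightarrow> ('v,'e) qpath set" where
  "Qset V E src tgt Ip = {p. is_path V E src tgt p \<and> p \<notin> Ip}"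

(* k Gamma / I as the k-space of coefficient functions supported on \<Q> *)
definition Alg :: "'v set \<Rightarrow> 'e set \<Rightarrow> ('e \<Rightarrow> 'v) \<Rightarrow> ('e \<Rightarrow> 'v) \<Rightarrow> ('v,'e) qpath set \<Rightarrow> (('v,'e) qpath \<Rightarrow> 'k::field) set" where
  "Alg V E src tgt Ip = {a. \<forall>p. p \<notin> Qset V E src tgt Ip \<longrightarrow> a p = 0}"

definition amult :: "'v set \<Rightarrow> 'e set \<Rightarrow> ('e \<Rightarrow> 'v) \<Rightarrow> ('e \<Rightarrow> 'v) \<Rightarrow> ('v,'e) qpath set \<Rightarrow>
    (('v,'e) qpath \<Rightarrow> 'k::field) \<Rightarrow> (('v,'e) qpath \<Rightarrow> 'k) \<Rightarrow> (('v,'e) qpath \<Rightarrow> 'k)" where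
  "amult V E src tgt Ip a b = (\<lambda>p. if p \<in> Qset V E src tgt Ip
     then (\<Sum>i\<in>{0..plen p}. a (pfx i p) * b (sfx tgt i p)) else 0)"

definition ascale :: "'k::field \<Rightarrow> ('a \<Rightarrow> 'k) \<Rightarrow> ('a \<Rightarrow> 'k)" where
  "ascale c a = (\<lambda>p. c * a p)"

(* the residue class of a path *)
definition bvec :: "('v,'e) qpath \<Rightarrow> (('v,'e) qpath \<Rightarrow> 'k::field)" where
  "bvec q = (\<lambda>p. if p = q then 1 else 0)"

(* k-linear derivations of k Gamma / I (normalised to be 0 outside the algebra, so that
   they form a k-vector space of functions) *)
definition Der :: "'v set \<Rightarrow> 'e set \<Rightarrow> ('e \<Rightarrow> 'v) \<Rightarrow> ('e \<Rightarrow> 'v) \<Rightarrow> ('v,'e) qpath set \<Rightarrow> ('v,'e,'k::field) qmap set" where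
  "Der V E src tgt Ip = {D.
     (\<forall>x. x \<notin> Alg V E src tgt Ip \<longrightarrow> D x = 0) \<and>
     (\<forall>x\<in>Alg V E src tgt Ip. D x \<in> Alg V E src tgt Ip) \<and>
     (\<forall>x\<in>Alg V E src tgt Ip. \<forall>y\<in>Alg V E src tgt Ip. D (x + y) = D x + D y) \<and>
     (\<forall>c. \<forall>x\<in>Alg V E src tgt Ip. D (ascale c x) = ascale c (D x)) \<and>
     (\<forall>x\<in>Alg V E src tgt Ip. \<forall>y\<in>Alg V E src tgt Ip.
        D (amult V E src tgt Ip x y) = amult V E src tgt Ip (D x) y + amult V E src tgt Ip x (D y))}"

definition Inn :: "'v set \<Rightarrow> 'e set \<Rightarrow> ('e \<Rightarrow> 'v) \<Rightarrow> ('e \<Rightarrow> 'v) \<Rightarrow> ('v,'e) qpath set \<Rightarrow> ('v,'e,'k::field) qmap set" where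
  "Inn V E src tgt Ip = {(\<lambda>x. if x \<in> Alg V E src tgt Ip
        then amult V E src tgt Ip a x - amult V E src tgt Ip x a else 0) | a. a \<in> Alg V E src tgt Ip}"

definition dscale :: "'k::field \<Rightarrow> ('v,'e,'k) qmap \<Rightarrow> ('v,'e,'k) qmap" where
  "dscale c D = (\<lambda>x p. c * D x p)"

(* dim_k HH^1 = dim_k Der - dim_k Inn  (= dimension of the quotient Der / Inn) *)
definition hh1_dim :: "'k::field itself \<Rightarrow> 'v set \<Rightarrow> 'e set \<Rightarrow> ('e \<Rightarrow> 'v) \<Rightarrow> ('e \<Rightarrow> 'v) \<Rightarrow> ('v,'e) qpath set \<Rightarrow> int" where
  "hh1_dim K V E src tgt Ip =
     int (vector_space.dim (dscale :: 'k \<Rightarrow> _) (Der V E src tgt Ip :: ('v,'e,'k) qmap set))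
   - int (vector_space.dim (dscale :: 'k \<Rightarrow> _) (Inn V E src tgt Ip :: ('v,'e,'k) qmap set))"

definition Dbar :: "'v set \<Rightarrow> 'e set \<Rightarrow> ('e \<Rightarrow> 'v) \<Rightarrow> ('e \<Rightarrow> 'v) \<Rightarrow> ('v,'e) qpath set \<Rightarrow>
    'e \<Rightarrow> ('v,'e) qpath \<Rightarrow> ('v,'e,'k::field) qmap" where
  "Dbar V E src tgt Ip r s = (THE D. D \<in> Der V E src tgt Ip \<and>
     (\<forall>v\<in>V. D (bvec (vpath v)) = 0) \<and>
     D (bvec (apath src r)) = bvec s \<and>
     (\<forall>e\<in>E. e \<noteq> r \<longrightarrow> D (bvec (apath src e)) = 0))"

definition B2bar :: "'v set \<Rightarrow> 'e set \<Rightarrow> ('e \<Rightarrow> 'v) \<Rightarrow> ('e \<Rightarrow> 'v) \<Rightarrow> ('v,'e) qpath set \<Rightarrow> ('v,'e,'k::field) qmap set" where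
  "B2bar V E src tgt Ip = {Dbar V E src tgt Ip r s | r s.
     r \<in> E \<and> s \<in> Qset V E src tgt Ip \<and> src r = pstart s \<and> tgt r = pend tgt s}"

end

theory Submission
  imports Defs
begin

text \<open>The paths outside \<open>I\<close> form a basis \<open>Q\<close> of \<open>k\<Gamma>/I\<close>, finite by acyclicity. Subtracting a suitable
  inner derivation, every derivation vanishes on the vertices \<open>e\<^sub>v\<close>; such a derivation sends each arrow
  \<open>r\<close> into the span of the paths parallel to \<open>r\<close>, and is then the corresponding combination of the
  \<open>D\<^sub>r\<^sub>,\<^sub>s\<close> (which are well defined by completeness). Hence the \<open>D\<^sub>r\<^sub>,\<^sub>s\<close> together with the \<open>ad q\<close>,
  \<open>q \<in> Q\<close> nontrivial, form a basis of the derivations, while the \<open>ad e\<^sub>v\<close> for \<open>v \<noteq> v\<^sub>0\<close> and the same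
  \<open>ad q\<close> form a basis of the inner derivations: \<open>\<Sum>\<^sub>v ad e\<^sub>v = ad 1 = 0\<close>, and by connectivity this
  is the only relation. Subtracting the dimensions gives \<open>|B\<^sub>2| + 1 - |V|\<close>.\<close>

lemma (in vector_space) inj_on_and_independent_image:
  assumes fin: "finite I"
    and coeffs: "\<And>c. (\<Sum>i\<in>I. scale (c i) (g i)) = 0 \<Longrightarrow> \<forall>i\<in>I. c i = 0"
  shows "inj_on g I \<and> independent (g ` I)"
proof
  show inj: "inj_on g I"
  proof (rule inj_onI, rule ccontr)
    fix i j assume i: "i \<in> I" and j: "j \<in> I" and "g i = g j" and "i \<noteq> j"
    define c :: "_ \<Rightarrow> 'a" where "c k = (if k = i then 1 else 0) - (if k = j then 1 else 0)" for k
    have "scale (c k) (g k) = (if k = i then g k else 0) - (if k = j then g k else 0)" for k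
      by (simp add: c_def scale_left_diff_distrib)
    then have "(\<Sum>k\<in>I. scale (c k) (g k)) = (\<Sum>k\<in>I. if k = i then g k else 0) - (\<Sum>k\<in>I. if k = j then g k else 0)"
      by (simp add: sum_subtractf)
    also have "\<dots> = 0" using i j fin \<open>g i = g j\<close> by simp
    finally have "c i = 0" using coeffs i by blast
    with \<open>i \<noteq> j\<close> show False by (simp add: c_def)
  qed
  show "independent (g ` I)"
  proof
    assume "dependent (g ` I)"
    then obtain u where u: "\<exists>v\<in>g ` I. u v \<noteq> 0" "(\<Sum>v\<in>g ` I. scale (u v) v) = 0"
      using dependent_finite[OF finite_imageI[OF fin]] by blast
    have "(\<Sum>i\<in>I. scale (u (g i)) (g i)) = 0"
      using u(2) by (simp add: sum.reindex[OF inj])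
    then have "\<forall>i\<in>I. u (g i) = 0" by (rule coeffs)
    with u(1) show False by blast
  qed
qed

lemma (in vector_space) dim_eq_card_of_basis_family:
  assumes "finite I"
    and "\<And>c. (\<Sum>i\<in>I. scale (c i) (g i)) = 0 \<Longrightarrow> \<forall>i\<in>I. c i = 0"
    and "g ` I \<subseteq> S" and "S \<subseteq> span (g ` I)"
  shows "dim S = card I"
  using inj_on_and_independent_image[OF assms(1,2)] assms(3,4)
  by (metis basis_card_eq_dim card_image)

lemma sum_lessThan_add:
  fixes f :: "nat \<Rightarrow> 'a::comm_monoid_add"
  shows "(\<Sum>i<m + n. f i) = (\<Sum>i<m. f i) + (\<Sum>j<n. f (m + j))"
  by (induction n) (simp_all add: add_ac)

lemma sum_atLeast0_atMost_eq_first: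
  "(\<And>i. i \<in> {1..n} \<Longrightarrow> f i = 0) \<Longrightarrow> (\<Sum>i\<in>{0..n::nat}. f i) = (f 0 :: 'a::comm_monoid_add)"
  by (subst sum.remove[of _ 0]) (auto intro!: sum.neutral)

lemma sum_atLeast0_atMost_eq_last:
  "(\<And>i. i < n \<Longrightarrow> f i = 0) \<Longrightarrow> (\<Sum>i\<in>{0..n::nat}. f i) = (f n :: 'a::comm_monoid_add)"
  by (subst sum.remove[of _ n]) (auto intro!: sum.neutral)

lemma sum_fun_apply: "(sum f A) x = (\<Sum>a\<in>A. f a x)"
  by (induction A rule: infinite_finite_induct) auto

lemma ascale_apply: "ascale c a p = c * a p"
  by (simp add: ascale_def)

lemma bvec_apply: "bvec q p = (if p = q then 1 else 0)"
  by (simp add: bvec_def)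

lemma dscale_apply: "dscale c D x = ascale c (D x)"
  by (simp add: dscale_def ascale_def)

lemma ascale_add: "ascale c (a + b) = ascale c a + ascale c b"
  and ascale_diff: "ascale c (a - b) = ascale c a - ascale c b"
  and ascale_zero [simp]: "ascale c 0 = 0"
  and ascale_zero_left [simp]: "ascale 0 a = 0"
  by (auto simp: fun_eq_iff algebra_simps ascale_apply)

interpretation DS: vector_space "dscale :: 'k::field \<Rightarrow> ('v,'e,'k) qmap \<Rightarrow> ('v,'e,'k) qmap"
  by unfold_locales (auto simp: dscale_def fun_eq_iff algebra_simps)

section \<open>Paths\<close>

locale quiver_path_algebra =
  fixes V :: "'v set" and E :: "'e set" and src tgt :: "'e \<Rightarrow> 'v"
    and Ip :: "('v,'e) qpath set"
  assumes quiver: "finite_quiver V E src tgt"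
    and ideal: "path_ideal_in_R2 V E src tgt Ip"
    and completeness: "complete_alg V E src tgt Ip"
    and acyclicity: "acyclic_alg V E src tgt Ip"
begin

abbreviation "path \<equiv> is_path V E src tgt"
abbreviation "Q \<equiv> Qset V E src tgt Ip"

fun walk :: "'v \<Rightarrow> 'e list \<Rightarrow> bool" where
  "walk v [] \<longleftrightarrow> v \<in> V"
| "walk v (e # es) \<longleftrightarrow> v \<in> V \<and> e \<in> E \<and> src e = v \<and> walk (tgt e) es"

lemma src_in_V: "e \<in> E \<Longrightarrow> src e \<in> V" and tgt_in_V: "e \<in> E \<Longrightarrow> tgt e \<in> V"
  using quiver unfolding finite_quiver_def by auto

lemma finite_V: "finite V" and finite_E: "finite E"
  using quiver unfolding finite_quiver_def by auto

lemma path_iff_walk: "path (v, es) \<longleftrightarrow> walk v es"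
proof (induction es arbitrary: v)
  case Nil
  then show ?case by (simp add: is_path_def)
next
  case (Cons e es)
  show ?case
  proof
    assume h: "path (v, e # es)"
    then have "path (tgt e, es)"
      unfolding is_path_def using tgt_in_V by (auto simp: hd_conv_nth)
    with h Cons show "walk v (e # es)" by (simp add: is_path_def)
  next
    assume h: "walk v (e # es)"
    then have "path (tgt e, es)" using Cons by simp
    with h show "path (v, e # es)"
      unfolding is_path_def by (auto simp: hd_conv_nth nth_Cons split: nat.splits)
  qed
qed

lemma pend_Cons: "pend tgt (v, e # es) = pend tgt (tgt e, es)"
  by (simp add: pend_def)

lemma pend_append: "pend tgt (v, as @ bs) = pend tgt (pend tgt (v, as), bs)"
  by (simp add: pend_def)

lemma walk_append: "walk v (as @ bs) \<longleftrightarrow> walk v as \<and> walk (pend tgt (v, as)) bs"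
proof (induction as arbitrary: v)
  case Nil
  then show ?case by (cases bs) (auto simp: pend_def)
next
  case (Cons a as)
  then show ?case by (auto simp: pend_Cons)
qed

lemma walk_pend_in_V: "walk v es \<Longrightarrow> pend tgt (v, es) \<in> V"
  by (induction es arbitrary: v) (auto simp: pend_def tgt_in_V)

lemma path_pend_in_V: "path p \<Longrightarrow> pend tgt p \<in> V"
  by (cases p) (simp add: path_iff_walk walk_pend_in_V)

lemma path_pstart_in_V: "path p \<Longrightarrow> pstart p \<in> V"
  by (simp add: is_path_def pstart_def)

lemma ideal_plen: "p \<in> Ip \<Longrightarrow> 2 \<le> plen p"
  using ideal unfolding path_ideal_in_R2_def by auto

lemma ideal_left: "p \<in> Ip \<Longrightarrow> path q \<Longrightarrow> pend tgt q = pstart p \<Longrightarrow> pconcat q p \<in> Ip"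
  and ideal_right: "p \<in> Ip \<Longrightarrow> path q \<Longrightarrow> pend tgt p = pstart q \<Longrightarrow> pconcat p q \<in> Ip"
  using ideal unfolding path_ideal_in_R2_def by blast+

lemma ideal_parallel:
  "path p \<Longrightarrow> path p' \<Longrightarrow> pstart p = pstart p' \<Longrightarrow> pend tgt p = pend tgt p' \<Longrightarrow> p \<in> Ip \<Longrightarrow> p' \<in> Ip"
  using completeness unfolding complete_alg_def by blast

lemma cycle_in_ideal: "path p \<Longrightarrow> pstart p = pend tgt p \<Longrightarrow> snd p \<noteq> [] \<Longrightarrow> p \<in> Ip"
  using acyclicity unfolding acyclic_alg_def by blast

lemma Q_iff: "p \<in> Q \<longleftrightarrow> path p \<and> p \<notin> Ip"
  by (simp add: Qset_def)

lemma Q_pstart_in_V: "t \<in> Q \<Longrightarrow> pstart t \<in> V" and Q_pend_in_V: "t \<in> Q \<Longrightarrow> pend tgt t \<in> V"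
  by (auto simp: Q_iff path_pstart_in_V path_pend_in_V)

lemma Q_pstart_neq_pend: "t \<in> Q \<Longrightarrow> snd t \<noteq> [] \<Longrightarrow> pstart t \<noteq> pend tgt t"
  using cycle_in_ideal Q_iff by blast

lemma path_pconcat: "path p \<Longrightarrow> path q \<Longrightarrow> pend tgt p = pstart q \<Longrightarrow> path (pconcat p q)"
  by (cases p, cases q) (auto simp: pconcat_def path_iff_walk walk_append pstart_def)

lemma path_pconcatD: "path (pconcat p q) \<Longrightarrow> pend tgt p = pstart q \<Longrightarrow> path p \<and> path q"
  by (cases p, cases q) (auto simp: pconcat_def path_iff_walk walk_append pstart_def)

lemma Q_pconcatD: "pconcat p q \<in> Q \<Longrightarrow> pend tgt p = pstart q \<Longrightarrow> p \<in> Q \<and> q \<in> Q"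
  unfolding Q_iff using path_pconcatD ideal_left ideal_right by blast

lemma pend_pconcat: "pend tgt p = pstart q \<Longrightarrow> pend tgt (pconcat p q) = pend tgt q"
  by (cases p, cases q) (auto simp: pconcat_def pend_def pstart_def)

lemma pstart_pconcat: "pstart (pconcat p q) = pstart p"
  by (simp add: pconcat_def pstart_def)

lemma pconcat_assoc: "pconcat (pconcat p q) r = pconcat p (pconcat q r)"
  by (simp add: pconcat_def)

lemma Q_pconcat3D:
  "pconcat p (pconcat q r) \<in> Q \<Longrightarrow> pend tgt p = pstart q \<Longrightarrow> pend tgt q = pstart r
   \<Longrightarrow> pconcat p q \<in> Q \<and> pconcat q r \<in> Q"
  by (metis Q_pconcatD pconcat_assoc pend_pconcat pstart_pconcat)

lemma vpath_in_Q_iff: "vpath v \<in> Q \<longleftrightarrow> v \<in> V"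
  using ideal_plen by (force simp: Q_iff vpath_def is_path_def plen_def)

lemma apath_in_Q: "e \<in> E \<Longrightarrow> apath src e \<in> Q"
  using ideal_plen by (force simp: Q_iff apath_def path_iff_walk tgt_in_V src_in_V plen_def)

text \<open>A path of length at least \<open>|V|\<close> visits some vertex twice; the cycle in between lies in \<open>I\<close>
  by acyclicity, hence so does the whole path.\<close>

lemma plen_Q_less_card_V:
  assumes "p \<in> Q" shows "plen p < card V"
proof (rule ccontr)
  assume long: "\<not> plen p < card V"
  obtain v es where p: "p = (v, es)" by force
  have walk: "walk v es" and notI: "(v, es) \<notin> Ip" using assms p by (auto simp: Q_iff path_iff_walk)
  let ?f = "\<lambda>i. pend tgt (v, take i es)"
  have "walk v (take i es)" for i
    using walk walk_append[of v "take i es" "drop i es"] by simp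
  then have "?f ` {0..length es} \<subseteq> V"
    using walk_pend_in_V by auto
  then have "card (?f ` {0..length es}) \<le> card V" by (simp add: card_mono finite_V)
  also have "card V < card {0..length es}" using long p by (simp add: plen_def)
  finally have "\<not> inj_on ?f {0..length es}" using card_image by fastforce
  then obtain i j where ij: "j \<le> length es" "i < j" "?f i = ?f j"
    unfolding inj_on_def by (metis atLeastAtMost_iff linorder_neqE_nat)
  define as where "as = take i es"
  define bs where "bs = drop i (take j es)"
  define cs where "cs = drop j es"
  have es: "es = as @ bs @ cs" unfolding as_def bs_def cs_def
    using ij by (metis append.assoc append_take_drop_id less_imp_le_nat take_take min.absorb1)
  have take_j: "take j es = as @ bs" unfolding as_def bs_def using ij
    by (metis append_take_drop_id less_imp_le_nat min.absorb1 take_take)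
  have "bs \<noteq> []" unfolding bs_def using ij by simp
  let ?w = "pend tgt (v, as)"
  have walks: "walk v as" "walk ?w bs" "walk (pend tgt (?w, bs)) cs"
    using walk unfolding es by (auto simp: walk_append pend_append[symmetric])
  have cycle: "pend tgt (?w, bs) = ?w"
    using ij(3) take_j unfolding as_def by (simp add: pend_append)
  have "(?w, bs) \<in> Ip"
    using cycle_in_ideal[of "(?w, bs)"] walks cycle \<open>bs \<noteq> []\<close> by (auto simp: path_iff_walk pstart_def)
  then have "pconcat (v, as) (?w, bs) \<in> Ip"
    by (rule ideal_left) (use walks in \<open>auto simp: path_iff_walk pstart_def\<close>)
  then have "pconcat (pconcat (v, as) (?w, bs)) (pend tgt (?w, bs), cs) \<in> Ip"
    by (rule ideal_right) (use walks cycle in \<open>auto simp: path_iff_walk pstart_def pend_append pconcat_def\<close>)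
  with notI show False by (simp add: pconcat_def es)
qed

lemma finite_Q: "finite Q"
proof -
  have "Q \<subseteq> V \<times> {es. set es \<subseteq> E \<and> length es \<le> card V}"
    using plen_Q_less_card_V by (force simp: Q_iff is_path_def plen_def)
  moreover have "finite (V \<times> {es. set es \<subseteq> E \<and> length es \<le> card V})"
    using finite_V finite_E finite_lists_length_le by blast
  ultimately show ?thesis by (rule finite_subset)
qed

lemma pfx_sfx_eq_iff:
  assumes "i \<le> plen x"
  shows "pfx i x = p \<and> sfx tgt i x = q \<longleftrightarrow> i = plen p \<and> x = pconcat p q \<and> pend tgt p = pstart q"
proof -
  obtain v xs where x: "x = (v, xs)" by force
  obtain u ps where p: "p = (u, ps)" by force
  obtain w qs where q: "q = (w, qs)" by force
  have i: "i \<le> length xs" using assms x by (simp add: plen_def)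
  show ?thesis
  proof
    assume "pfx i x = p \<and> sfx tgt i x = q"
    then have "u = v" "ps = take i xs" "qs = drop i xs" "w = (if i = 0 then v else tgt (xs ! (i - 1)))"
      using x p q by (auto simp: pfx_def sfx_def)
    moreover from this have "pend tgt p = w"
      using i by (auto simp: pend_def p last_conv_nth nth_take)
    ultimately show "i = plen p \<and> x = pconcat p q \<and> pend tgt p = pstart q"
      using i x p q by (simp add: plen_def pconcat_def pstart_def min_def)
  next
    assume "i = plen p \<and> x = pconcat p q \<and> pend tgt p = pstart q"
    then have "i = length ps" "v = u" "xs = ps @ qs" "pend tgt (u, ps) = w"
      using x p q by (auto simp: plen_def pconcat_def pstart_def)
    moreover have "ps \<noteq> [] \<Longrightarrow> xs ! (i - 1) = last ps"
      using calculation by (simp add: nth_append last_conv_nth)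
    ultimately show "pfx i x = p \<and> sfx tgt i x = q"
      using x p q by (cases "ps = []") (simp_all add: pend_def pfx_def sfx_def)
  qed
qed

lemma pfx_plen: "pfx (plen t) t = t"
  by (simp add: pfx_def plen_def)

lemma sfx_plen: "sfx tgt (plen t) t = vpath (pend tgt t)"
  by (cases t) (auto simp: sfx_def plen_def vpath_def pend_def last_conv_nth)

section \<open>The algebra \<open>k\<Gamma>/I\<close>\<close>

abbreviation "mul \<equiv> amult V E src tgt Ip"
abbreviation "\<A> \<equiv> Alg V E src tgt Ip"

lemma Alg_iff: "a \<in> \<A> \<longleftrightarrow> (\<forall>p. p \<notin> Q \<longrightarrow> a p = 0)"
  by (simp add: Alg_def)

lemma AlgD: "a \<in> \<A> \<Longrightarrow> p \<notin> Q \<Longrightarrow> a p = 0"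
  unfolding Alg_def by blast

lemma amult_in_Alg [simp]: "mul a b \<in> \<A>"
  by (simp add: Alg_def amult_def)

lemma zero_in_Alg [simp]: "0 \<in> \<A>"
  and add_in_Alg [simp]: "a \<in> \<A> \<Longrightarrow> b \<in> \<A> \<Longrightarrow> a + b \<in> \<A>"
  and diff_in_Alg [simp]: "a \<in> \<A> \<Longrightarrow> b \<in> \<A> \<Longrightarrow> a - b \<in> \<A>"
  and ascale_in_Alg [simp]: "a \<in> \<A> \<Longrightarrow> ascale c a \<in> \<A>"
  by (auto simp: Alg_def ascale_def)

lemma sum_in_Alg: "(\<And>i. i \<in> I \<Longrightarrow> f i \<in> \<A>) \<Longrightarrow> sum f I \<in> \<A>"
  by (induction I rule: infinite_finite_induct) auto

lemma bvec_in_Alg [simp]: "q \<in> Q \<Longrightarrow> bvec q \<in> \<A>"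
  by (simp add: Alg_def bvec_def)

lemma amult_add_left: "mul (a + b) c = mul a c + mul b c"
  and amult_add_right: "mul c (a + b) = mul c a + mul c b"
  and amult_diff_left: "mul (a - b) c = mul a c - mul b c"
  and amult_diff_right: "mul c (a - b) = mul c a - mul c b"
  and amult_scale_left: "mul (ascale k a) c = ascale k (mul a c)"
  and amult_scale_right: "mul c (ascale k a) = ascale k (mul c a)"
  and amult_zero_left [simp]: "mul 0 c = 0"
  and amult_zero_right [simp]: "mul c 0 = 0"
  by (auto simp: amult_def fun_eq_iff algebra_simps sum.distrib sum_subtractf sum_distrib_left ascale_apply)

lemma amult_sum_left: "mul (sum f I) c = (\<Sum>i\<in>I. mul (f i) c)"
proof (induction I rule: infinite_finite_induct)
  case (insert x F)
  then show ?case by (simp only: sum.insert[OF insert.hyps] amult_add_left)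
next
  case (infinite A)
  show ?case by (simp only: sum.infinite[OF infinite.hyps] amult_zero_left)
qed (simp only: sum.empty amult_zero_left)

lemma amult_sum_right: "mul c (sum f I) = (\<Sum>i\<in>I. mul c (f i))"
proof (induction I rule: infinite_finite_induct)
  case (insert x F)
  then show ?case by (simp only: sum.insert[OF insert.hyps] amult_add_right)
next
  case (infinite A)
  show ?case by (simp only: sum.infinite[OF infinite.hyps] amult_zero_right)
qed (simp only: sum.empty amult_zero_right)

lemma basis_expansion: "a \<in> \<A> \<Longrightarrow> a = (\<Sum>p\<in>Q. ascale (a p) (bvec p))"
proof (rule ext)
  fix t assume a: "a \<in> \<A>"
  have "(\<Sum>p\<in>Q. ascale (a p) (bvec p)) t = (\<Sum>p\<in>Q. if p = t then a p else 0)"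
    by (auto simp: sum_fun_apply bvec_apply ascale_apply intro!: sum.cong)
  also have "\<dots> = a t" using a by (simp add: finite_Q AlgD)
  finally show "a t = (\<Sum>p\<in>Q. ascale (a p) (bvec p)) t" by simp
qed

lemma amult_bvec_apply:
  "mul (bvec p) (bvec q) t = (if pend tgt p = pstart q \<and> pconcat p q \<in> Q then bvec (pconcat p q) t else 0)"
proof (cases "t \<in> Q")
  case True
  have "mul (bvec p) (bvec q) t = (\<Sum>i\<in>{0..plen t}. bvec p (pfx i t) * bvec q (sfx tgt i t))"
    using True by (simp add: amult_def)
  also have "\<dots> = (\<Sum>i\<in>{0..plen t}.
      if i = plen p then (if t = pconcat p q \<and> pend tgt p = pstart q then 1 else 0) else 0)"
  proof (rule sum.cong[OF refl])
    fix i assume "i \<in> {0..plen t}"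
    then have "pfx i t = p \<and> sfx tgt i t = q \<longleftrightarrow> i = plen p \<and> t = pconcat p q \<and> pend tgt p = pstart q"
      by (intro pfx_sfx_eq_iff) simp
    then show "bvec p (pfx i t) * bvec q (sfx tgt i t) =
        (if i = plen p then (if t = pconcat p q \<and> pend tgt p = pstart q then 1 else 0) else 0)"
      by (auto simp: bvec_apply)
  qed
  also have "\<dots> = (if plen p \<le> plen t \<and> t = pconcat p q \<and> pend tgt p = pstart q then 1 else 0)"
    by (subst sum.delta) auto
  also have "\<dots> = (if t = pconcat p q \<and> pend tgt p = pstart q then 1 else 0)"
    by (auto simp: plen_def pconcat_def)
  finally show ?thesis using True by (auto simp: bvec_apply)
qed (auto simp: amult_def bvec_apply)

lemma amult_bvec:
  "mul (bvec p) (bvec q) = (if pend tgt p = pstart q \<and> pconcat p q \<in> Q then bvec (pconcat p q) else 0)"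
  by (rule ext) (simp add: amult_bvec_apply)

definition linear_on_Alg :: "('v,'e,'k::field) qmap \<Rightarrow> bool" where
  "linear_on_Alg L \<longleftrightarrow>
     (\<forall>x\<in>\<A>. \<forall>y\<in>\<A>. L (x + y) = L x + L y) \<and> (\<forall>c. \<forall>x\<in>\<A>. L (ascale c x) = ascale c (L x))"

lemma linear_on_Alg_zero: "linear_on_Alg L \<Longrightarrow> L 0 = 0"
  unfolding linear_on_Alg_def by (metis ascale_zero zero_in_Alg fun_eq_iff ascale_apply mult_zero_left zero_fun_apply)

lemma linear_on_Alg_sum:
  assumes L: "linear_on_Alg L" and f: "\<And>i. i \<in> I \<Longrightarrow> f i \<in> \<A>"
  shows "L (\<Sum>i\<in>I. ascale (c i) (f i)) = (\<Sum>i\<in>I. ascale (c i) (L (f i)))"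
  using f
proof (induction I rule: infinite_finite_induct)
  case (insert x F)
  have "(\<Sum>i\<in>F. ascale (c i) (f i)) \<in> \<A>" by (rule sum_in_Alg) (use insert.prems in simp)
  then have "L (ascale (c x) (f x) + (\<Sum>i\<in>F. ascale (c i) (f i))) =
      ascale (c x) (L (f x)) + L (\<Sum>i\<in>F. ascale (c i) (f i))"
    using L insert.prems unfolding linear_on_Alg_def by simp
  also have "L (\<Sum>i\<in>F. ascale (c i) (f i)) = (\<Sum>i\<in>F. ascale (c i) (L (f i)))"
    by (rule insert.IH) (use insert.prems in simp)
  finally show ?case by (simp only: sum.insert[OF insert.hyps])
next
  case (infinite A)
  show ?case by (simp only: sum.infinite[OF infinite.hyps] linear_on_Alg_zero[OF L])
qed (use linear_on_Alg_zero[OF L] in \<open>simp only: sum.empty\<close>)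

lemma linear_on_Alg_expansion:
  "linear_on_Alg L \<Longrightarrow> x \<in> \<A> \<Longrightarrow> L x = (\<Sum>p\<in>Q. ascale (x p) (L (bvec p)))"
  by (subst basis_expansion, assumption, rule linear_on_Alg_sum) auto

lemma linear_on_Alg_eqI:
  assumes "linear_on_Alg F" "linear_on_Alg G" "\<And>p. p \<in> Q \<Longrightarrow> F (bvec p) = G (bvec p)" "x \<in> \<A>"
  shows "F x = G x"
proof -
  have "F x = (\<Sum>p\<in>Q. ascale (x p) (F (bvec p)))" by (rule linear_on_Alg_expansion[OF assms(1,4)])
  also have "\<dots> = (\<Sum>p\<in>Q. ascale (x p) (G (bvec p)))" using assms(3) by simp
  also have "\<dots> = G x" by (rule linear_on_Alg_expansion[OF assms(2,4), symmetric])
  finally show ?thesis .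
qed

lemma amult_assoc_bvec:
  "mul (mul (bvec p) (bvec q)) (bvec r :: _ \<Rightarrow> 'k::field) = mul (bvec p) (mul (bvec q) (bvec r))"
proof -
  let ?X = "if pend tgt p = pstart q \<and> pend tgt q = pstart r \<and> pconcat p (pconcat q r) \<in> Q
            then bvec (pconcat p (pconcat q r)) else (0 :: _ \<Rightarrow> 'k)"
  have "mul (mul (bvec p) (bvec q)) (bvec r) = ?X"
    by (auto simp: amult_bvec pend_pconcat pconcat_assoc dest: Q_pconcatD Q_pconcat3D)
  moreover have "mul (bvec p) (mul (bvec q) (bvec r)) = ?X"
    by (auto simp: amult_bvec pstart_pconcat pconcat_assoc dest: Q_pconcatD Q_pconcat3D)
  ultimately show ?thesis by simp
qed

lemma amult_assoc:
  assumes "x \<in> \<A>" "y \<in> \<A>" "z \<in> \<A>"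
  shows "mul (mul x y) z = mul x (mul y z)"
proof -
  have lin: "linear_on_Alg (\<lambda>x. mul (mul x y) z)" "linear_on_Alg (\<lambda>x. mul x (mul y z))"
    "linear_on_Alg (\<lambda>y. mul (mul x y) z)" "linear_on_Alg (\<lambda>y. mul x (mul y z))"
    "linear_on_Alg (\<lambda>z. mul (mul x y) z)" "linear_on_Alg (\<lambda>z. mul x (mul y z))" for x y z
    by (simp_all add: linear_on_Alg_def amult_add_left amult_add_right amult_scale_left amult_scale_right)
  have "mul (mul (bvec p) (bvec q)) z = mul (bvec p) (mul (bvec q) z)" if "z \<in> \<A>" for p q z
    using linear_on_Alg_eqI[OF lin(5,6)] amult_assoc_bvec that by blast
  then have "mul (mul (bvec p) y) z = mul (bvec p) (mul y z)" if "y \<in> \<A>" "z \<in> \<A>" for p y z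
    using linear_on_Alg_eqI[OF lin(3,4)] that by blast
  then show ?thesis
    using linear_on_Alg_eqI[OF lin(1,2)] assms by blast
qed

definition vertex_supported :: "(('v,'e) qpath \<Rightarrow> 'k::field) \<Rightarrow> bool" where
  "vertex_supported a \<longleftrightarrow> (\<forall>p. snd p \<noteq> [] \<longrightarrow> a p = 0)"

lemma amult_vertex_supported_left:
  assumes "vertex_supported a"
  shows "mul a y t = (if t \<in> Q then a (vpath (pstart t)) * y t else 0)"
proof (cases "t \<in> Q")
  case True
  have "mul a y t = (\<Sum>i\<in>{0..plen t}. a (pfx i t) * y (sfx tgt i t))"
    using True by (simp add: amult_def)
  also have "\<dots> = a (pfx 0 t) * y (sfx tgt 0 t)"
  proof (rule sum_atLeast0_atMost_eq_first)
    fix i assume "i \<in> {1..plen t}"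
    then have "take i (snd t) \<noteq> []" by (auto simp: plen_def)
    then show "a (pfx i t) * y (sfx tgt i t) = 0" using assms by (simp add: vertex_supported_def pfx_def)
  qed
  also have "\<dots> = a (vpath (pstart t)) * y t"
    by (simp add: pfx_def sfx_def vpath_def pstart_def)
  finally show ?thesis using True by simp
qed (simp add: amult_def)

lemma amult_vertex_supported_right:
  assumes "vertex_supported a"
  shows "mul y a t = (if t \<in> Q then y t * a (vpath (pend tgt t)) else 0)"
proof (cases "t \<in> Q")
  case True
  have "mul y a t = (\<Sum>i\<in>{0..plen t}. y (pfx i t) * a (sfx tgt i t))"
    using True by (simp add: amult_def)
  also have "\<dots> = y (pfx (plen t) t) * a (sfx tgt (plen t) t)"
    by (rule sum_atLeast0_atMost_eq_last) (use assms in \<open>auto simp: vertex_supported_def sfx_def plen_def\<close>)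
  also have "\<dots> = y t * a (vpath (pend tgt t))"
    by (simp add: pfx_plen sfx_plen)
  finally show ?thesis using True by simp
qed (simp add: amult_def)

definition ev :: "'v \<Rightarrow> ('v,'e) qpath \<Rightarrow> 'k::field" where
  "ev v = bvec (vpath v)"

definition arr :: "'e \<Rightarrow> ('v,'e) qpath \<Rightarrow> 'k::field" where
  "arr e = bvec (apath src e)"

definition one :: "('v,'e) qpath \<Rightarrow> 'k::field" where
  "one = (\<Sum>v\<in>V. ev v)"

lemma ev_in_Alg [simp]: "v \<in> V \<Longrightarrow> ev v \<in> \<A>"
  by (simp add: ev_def vpath_in_Q_iff)

lemma arr_in_Alg [simp]: "e \<in> E \<Longrightarrow> arr e \<in> \<A>"
  by (simp add: arr_def apath_in_Q)

lemma vertex_supported_ev: "vertex_supported (ev v)"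
  by (simp add: vertex_supported_def ev_def bvec_apply vpath_def)

lemma ev_vpath: "ev v (vpath w) = (if v = w then 1 else 0)"
  by (auto simp: ev_def bvec_apply vpath_def)

lemma one_apply: "one p = (if snd p = [] \<and> fst p \<in> V then 1 else 0)"
proof -
  have "one p = (\<Sum>v\<in>V. if v = fst p then (if snd p = [] then 1 else 0) else 0)"
    by (cases p) (auto simp: one_def sum_fun_apply ev_def bvec_apply vpath_def intro!: sum.cong)
  also have "\<dots> = (if snd p = [] \<and> fst p \<in> V then 1 else 0)"
    by (subst sum.delta) (auto simp: finite_V)
  finally show ?thesis .
qed

lemma vertex_supported_one: "vertex_supported one"
  by (simp add: vertex_supported_def one_apply)

lemma amult_one_left: "x \<in> \<A> \<Longrightarrow> mul one x = x"
  by (rule ext) (auto simp: amult_vertex_supported_left[OF vertex_supported_one] one_apply vpath_def Q_pstart_in_V AlgD)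

lemma amult_one_right: "x \<in> \<A> \<Longrightarrow> mul x one = x"
  by (rule ext) (auto simp: amult_vertex_supported_right[OF vertex_supported_one] one_apply vpath_def Q_pend_in_V AlgD)

lemma amult_ev_left: "y \<in> \<A> \<Longrightarrow> mul (ev z) y t = (if pstart t = z then y t else 0)"
  by (auto simp: amult_vertex_supported_left[OF vertex_supported_ev] ev_vpath AlgD)

lemma amult_ev_right: "y \<in> \<A> \<Longrightarrow> mul y (ev z) t = (if pend tgt t = z then y t else 0)"
  by (auto simp: amult_vertex_supported_right[OF vertex_supported_ev] ev_vpath AlgD)

lemma sum_ev_apply:
  "finite U \<Longrightarrow> (\<Sum>v\<in>U. ascale (f v) (ev v)) t = (if snd t = [] \<and> fst t \<in> U then f (fst t) else 0)"
proof -
  assume "finite U"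
  have "(\<Sum>v\<in>U. ascale (f v) (ev v)) t = (\<Sum>v\<in>U. if v = fst t then (if snd t = [] then f v else 0) else 0)"
    by (cases t) (auto simp: sum_fun_apply ascale_apply ev_def bvec_apply vpath_def intro!: sum.cong)
  with \<open>finite U\<close> show ?thesis by simp
qed

lemma amult_ev_ev: "v \<in> V \<Longrightarrow> mul (ev v) (ev v) = ev v"
  and amult_ev_ev_neq: "u \<noteq> z \<Longrightarrow> mul (ev u) (ev z) = 0"
  by (simp_all add: ev_def amult_bvec vpath_def pend_def pstart_def pconcat_def vpath_in_Q_iff[unfolded vpath_def])

lemma amult_ev_src_arr: "e \<in> E \<Longrightarrow> mul (ev (src e)) (arr e) = arr e"
  and amult_arr_ev_tgt: "e \<in> E \<Longrightarrow> mul (arr e) (ev (tgt e)) = arr e"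
  using apath_in_Q[of e]
  by (simp_all add: ev_def arr_def amult_bvec vpath_def pend_def pstart_def pconcat_def apath_def)

section \<open>Inner derivations and derivations\<close>

definition ad :: "(('v,'e) qpath \<Rightarrow> 'k::field) \<Rightarrow> ('v,'e,'k) qmap" where
  "ad a = (\<lambda>x. if x \<in> \<A> then mul a x - mul x a else 0)"

lemma Inn_eq_image_ad: "Inn V E src tgt Ip = ad ` \<A>"
  by (auto simp: Inn_def ad_def)

lemma ad_add: "ad (a + b) = ad a + ad b"
  and ad_ascale: "ad (ascale c a) = dscale c (ad a)"
  and ad_zero: "ad 0 = 0"
  by (auto simp: fun_eq_iff ad_def dscale_apply amult_add_left amult_add_right
      amult_scale_left amult_scale_right ascale_diff)

lemma ad_sum: "ad (sum f I) = (\<Sum>i\<in>I. ad (f i))"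
proof (induction I rule: infinite_finite_induct)
  case (insert x F)
  then show ?case by (simp only: sum.insert[OF insert.hyps] ad_add)
next
  case (infinite A)
  show ?case by (simp only: sum.infinite[OF infinite.hyps] ad_zero)
qed (simp only: sum.empty ad_zero)

lemma ad_basis_expansion: "a \<in> \<A> \<Longrightarrow> ad a = (\<Sum>q\<in>Q. dscale (a q) (ad (bvec q)))"
  by (subst basis_expansion) (simp_all only: ad_sum ad_ascale)

lemma ad_one: "ad one = 0"
  by (rule ext) (simp add: ad_def amult_one_left amult_one_right)

lemma ad_ev_apply:
  "w \<in> \<A> \<Longrightarrow> z \<in> V \<Longrightarrow> ad w (ev z) t = (if pend tgt t = z then w t else 0) - (if pstart t = z then w t else 0)"
  by (simp add: ad_def amult_ev_right amult_ev_left)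

lemma ad_vertex_supported_ev:
  assumes "a \<in> \<A>" "vertex_supported a" "z \<in> V"
  shows "ad a (ev z) = 0"
proof
  fix t
  have "snd t = [] \<Longrightarrow> pend tgt t = pstart t" by (cases t) (simp add: pend_def pstart_def)
  moreover have "snd t \<noteq> [] \<Longrightarrow> a t = 0" using assms(2) by (cases t) (simp add: vertex_supported_def)
  ultimately show "ad a (ev z) t = 0 t"
    using ad_ev_apply[OF assms(1,3), of t] by (cases "snd t = []") auto
qed

abbreviation "Der\<^sub>A \<equiv> Der V E src tgt Ip"

lemma DerI:
  assumes "\<And>x. x \<notin> \<A> \<Longrightarrow> D x = 0" "\<And>x. x \<in> \<A> \<Longrightarrow> D x \<in> \<A>" "linear_on_Alg D"
    "\<And>x y. x \<in> \<A> \<Longrightarrow> y \<in> \<A> \<Longrightarrow> D (mul x y) = mul (D x) y + mul x (D y)"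
  shows "D \<in> Der\<^sub>A"
  using assms unfolding Der_def linear_on_Alg_def by blast

lemma DerD:
  assumes "D \<in> Der\<^sub>A"
  shows "x \<notin> \<A> \<Longrightarrow> D x = 0" "x \<in> \<A> \<Longrightarrow> D x \<in> \<A>" "linear_on_Alg D"
    "x \<in> \<A> \<Longrightarrow> y \<in> \<A> \<Longrightarrow> D (mul x y) = mul (D x) y + mul x (D y)"
  using assms unfolding Der_def linear_on_Alg_def by blast+

lemma ad_in_Der: "a \<in> \<A> \<Longrightarrow> ad a \<in> Der\<^sub>A"
  by (rule DerI)
    (auto simp: ad_def linear_on_Alg_def amult_add_left amult_add_right amult_scale_left
      amult_scale_right ascale_diff amult_diff_left amult_diff_right amult_assoc)

lemma subspace_Der: "DS.subspace (Der\<^sub>A :: ('v,'e,'k::field) qmap set)"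
proof (rule DS.subspaceI)
  show "0 \<in> Der\<^sub>A" by (rule DerI) (auto simp: linear_on_Alg_def)
next
  fix D1 D2 :: "('v,'e,'k) qmap" assume "D1 \<in> Der\<^sub>A" "D2 \<in> Der\<^sub>A"
  then show "D1 + D2 \<in> Der\<^sub>A"
    using DerD[of D1] DerD[of D2]
    by (intro DerI) (auto simp: linear_on_Alg_def amult_add_left amult_add_right ascale_add)
next
  fix c and D :: "('v,'e,'k) qmap" assume "D \<in> Der\<^sub>A"
  then show "dscale c D \<in> Der\<^sub>A"
    using DerD[of D]
    by (intro DerI) (auto simp: linear_on_Alg_def dscale_apply amult_scale_left amult_scale_right ascale_add
        fun_eq_iff ascale_apply distrib_left)
qed

lemma Leibniz_from_basis:
  assumes L: "linear_on_Alg L"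
    and basis: "\<And>p q. p \<in> Q \<Longrightarrow> q \<in> Q \<Longrightarrow> L (mul (bvec p) (bvec q)) = mul (L (bvec p)) (bvec q) + mul (bvec p) (L (bvec q))"
    and "x \<in> \<A>" "y \<in> \<A>"
  shows "L (mul x y) = mul (L x) y + mul x (L y)"
proof -
  have lin: "linear_on_Alg (\<lambda>x. L (mul x y))" "linear_on_Alg (\<lambda>x. mul (L x) y + mul x (L y))"
    "linear_on_Alg (\<lambda>y. L (mul x y))" "linear_on_Alg (\<lambda>y. mul (L x) y + mul x (L y))" for x y
    using L by (auto simp: linear_on_Alg_def amult_add_left amult_add_right amult_scale_left
        amult_scale_right ascale_add)
  have "L (mul (bvec p) y) = mul (L (bvec p)) y + mul (bvec p) (L y)" if "p \<in> Q" "y \<in> \<A>" for p y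
    using linear_on_Alg_eqI[OF lin(3,4)] basis that by blast
  then show ?thesis
    using linear_on_Alg_eqI[OF lin(1,2)] assms(3,4) by blast
qed

lemma Der_eq_zeroI:
  assumes D: "D \<in> Der\<^sub>A" and vertices: "\<And>v. v \<in> V \<Longrightarrow> D (ev v) = 0"
    and arrows: "\<And>e. e \<in> E \<Longrightarrow> D (arr e) = 0"
  shows "D = 0"
proof -
  have basis: "D (bvec q) = 0" if "q \<in> Q" "plen q = n" for n q
    using that
  proof (induction n arbitrary: q)
    case 0
    then obtain v where "q = vpath v" by (cases q) (auto simp: plen_def vpath_def)
    with 0 vertices show ?case by (simp add: ev_def vpath_in_Q_iff)
  next
    case (Suc n)
    obtain v es a where q: "q = (v, es @ [a])"
      using Suc.prems by (metis plen_def prod.collapse rev_exhaust length_0_conv nat.distinct(1))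
    have "walk v (es @ [a])" using Suc.prems q by (simp add: Q_iff path_iff_walk)
    then have a: "a \<in> E" "pend tgt (v, es) = pstart (apath src a)"
      by (auto simp: walk_append apath_def pstart_def)
    have qq: "q = pconcat (v, es) (apath src a)" by (simp add: q pconcat_def apath_def)
    have es: "(v, es) \<in> Q" using Q_pconcatD Suc.prems qq a by blast
    have "bvec q = mul (bvec (v, es)) (arr a)"
      using a Suc.prems qq by (simp add: arr_def amult_bvec)
    moreover have "D (bvec (v, es)) = 0" by (rule Suc.IH[OF es]) (use Suc.prems q in \<open>simp add: plen_def\<close>)
    moreover have "D (arr a) = 0" using arrows a by simp
    moreover have "D (mul (bvec (v, es)) (arr a)) = mul (D (bvec (v, es))) (arr a) + mul (bvec (v, es)) (D (arr a))"
      using DerD(4)[OF D] es a by simp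
    ultimately show ?case by (metis amult_zero_left amult_zero_right add_0)
  qed
  show ?thesis
  proof
    fix x show "D x = 0 x"
    proof (cases "x \<in> \<A>")
      case True
      then show ?thesis using linear_on_Alg_expansion[OF DerD(3)[OF D] True] basis by simp
    qed (use DerD(1)[OF D] in simp)
  qed
qed

section \<open>The derivations \<open>D\<^sub>r\<^sub>,\<^sub>s\<close>\<close>

definition parallel :: "'e \<Rightarrow> ('v,'e) qpath \<Rightarrow> bool" where
  "parallel r s \<longleftrightarrow> r \<in> E \<and> s \<in> Q \<and> src r = pstart s \<and> tgt r = pend tgt s"

definition replace_at :: "('v,'e) qpath \<Rightarrow> nat \<Rightarrow> ('v,'e) qpath \<Rightarrow> ('v,'e) qpath" where
  "replace_at s i p = (fst p, take i (snd p) @ snd s @ drop (Suc i) (snd p))"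

text \<open>The Leibniz rule forces \<open>D\<^sub>r\<^sub>,\<^sub>s(a\<^sub>1\<cdots>a\<^sub>n)\<close> to be the sum, over the positions \<open>i\<close> with
  \<open>a\<^sub>i = r\<close>, of the path with \<open>a\<^sub>i\<close> replaced by \<open>s\<close>.\<close>

definition replace_sum :: "'e \<Rightarrow> ('v,'e) qpath \<Rightarrow> ('v,'e) qpath \<Rightarrow> ('v,'e) qpath \<Rightarrow> 'k::field" where
  "replace_sum r s p = (\<Sum>i<plen p. if snd p ! i = r then bvec (replace_at s i p) else 0)"

definition D_rs :: "'e \<Rightarrow> ('v,'e) qpath \<Rightarrow> ('v,'e,'k::field) qmap" where
  "D_rs r s x = (if x \<in> \<A> then \<Sum>p\<in>Q. ascale (x p) (replace_sum r s p) else 0)"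

lemma replace_at_path:
  assumes "parallel r s" and "path p" and "i < plen p" and "snd p ! i = r"
  shows "path (replace_at s i p) \<and> pstart (replace_at s i p) = pstart p \<and> pend tgt (replace_at s i p) = pend tgt p"
proof -
  obtain v es where p: "p = (v, es)" by force
  obtain w ss where s: "s = (w, ss)" by force
  define pre where "pre = take i es"
  define post where "post = drop (Suc i) es"
  have es: "es = pre @ r # post"
    using id_take_nth_drop[of i es] assms(3,4) p by (simp add: pre_def post_def plen_def)
  have replaced: "replace_at s i p = (v, pre @ ss @ post)" by (simp add: replace_at_def p s pre_def post_def)
  have "walk v (pre @ r # post)" using assms(2) p es by (simp add: path_iff_walk)
  then have "walk v pre" "src r = pend tgt (v, pre)" "r \<in> E" "walk (tgt r) post"
    by (auto simp: walk_append)
  moreover have "w = src r" "pend tgt (w, ss) = tgt r" "walk w ss"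
    using assms(1) s by (auto simp: parallel_def pstart_def Q_iff path_iff_walk)
  ultimately show ?thesis
    using replaced p es by (simp add: path_iff_walk pstart_def walk_append pend_append pend_Cons)
qed

text \<open>This is the only use of completeness; it makes \<open>D\<^sub>r\<^sub>,\<^sub>s\<close> compatible with \<open>I\<close>.\<close>

lemma replace_at_in_Q_iff:
  "parallel r s \<Longrightarrow> path p \<Longrightarrow> i < plen p \<Longrightarrow> snd p ! i = r \<Longrightarrow> replace_at s i p \<in> Q \<longleftrightarrow> p \<in> Q"
  using replace_at_path ideal_parallel by (metis Q_iff)

lemma replace_at_pconcat_left: "i < plen p \<Longrightarrow> replace_at s i (pconcat p q) = pconcat (replace_at s i p) q"
  and replace_at_pconcat_right: "replace_at s (plen p + j) (pconcat p q) = pconcat p (replace_at s j q)"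
  by (simp_all add: replace_at_def pconcat_def plen_def)

lemma replace_sum_in_Alg:
  assumes "parallel r s" "p \<in> Q" shows "replace_sum r s p \<in> \<A>"
  unfolding replace_sum_def
proof (intro sum_in_Alg)
  fix i assume "i \<in> {..<plen p}"
  then show "(if snd p ! i = r then bvec (replace_at s i p) else 0) \<in> \<A>"
    using replace_at_in_Q_iff[OF assms(1), of p i] assms(2) by (simp add: Q_iff)
qed

lemma replace_sum_pconcat:
  "replace_sum r s (pconcat p q) =
    (\<Sum>i<plen p. if snd p ! i = r then bvec (replace_at s i (pconcat p q)) else 0) +
    (\<Sum>j<plen q. if snd q ! j = r then bvec (replace_at s (plen p + j) (pconcat p q)) else 0)"
proof -
  have "plen (pconcat p q) = plen p + plen q" by (simp add: plen_def pconcat_def)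
  then show ?thesis unfolding replace_sum_def
    by (simp add: sum_lessThan_add) (auto simp: pconcat_def plen_def nth_append intro!: sum.cong)
qed

lemma D_rs_bvec: "p \<in> Q \<Longrightarrow> D_rs r s (bvec p) = replace_sum r s p"
proof -
  assume p: "p \<in> Q"
  have "(\<Sum>t\<in>Q. ascale (bvec p t) (replace_sum r s t)) = (\<Sum>t\<in>Q. if t = p then replace_sum r s t else 0)"
    by (rule sum.cong) (auto simp: bvec_apply fun_eq_iff ascale_apply)
  with p show ?thesis by (simp add: D_rs_def finite_Q)
qed

lemma linear_on_Alg_D_rs: "linear_on_Alg (D_rs r s)"
  unfolding linear_on_Alg_def
  by (auto simp: D_rs_def fun_eq_iff sum_fun_apply ascale_apply algebra_simps sum.distrib sum_distrib_left)

lemma amult_replace_at_bvec: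
  assumes "parallel r s" "p \<in> Q" "q \<in> Q" "i < plen p" "snd p ! i = r"
  shows "mul (bvec (replace_at s i p)) (bvec q :: _ \<Rightarrow> 'k::field) =
    (if pend tgt p = pstart q \<and> pconcat p q \<in> Q then bvec (replace_at s i (pconcat p q)) else 0)"
proof -
  have "pend tgt (replace_at s i p) = pend tgt p"
    using replace_at_path[OF assms(1) _ assms(4,5)] assms(2) by (simp add: Q_iff)
  moreover have "pend tgt p = pstart q \<Longrightarrow> replace_at s i (pconcat p q) \<in> Q \<longleftrightarrow> pconcat p q \<in> Q"
    using replace_at_in_Q_iff[OF assms(1) path_pconcat, of p q i] assms(2-5)
    by (simp add: Q_iff pconcat_def plen_def nth_append)
  ultimately show ?thesis using assms(4) by (auto simp: amult_bvec replace_at_pconcat_left)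
qed

lemma amult_bvec_replace_at:
  assumes "parallel r s" "p \<in> Q" "q \<in> Q" "j < plen q" "snd q ! j = r"
  shows "mul (bvec p) (bvec (replace_at s j q) :: _ \<Rightarrow> 'k::field) =
    (if pend tgt p = pstart q \<and> pconcat p q \<in> Q then bvec (replace_at s (plen p + j) (pconcat p q)) else 0)"
proof -
  have "pstart (replace_at s j q) = pstart q"
    using replace_at_path[OF assms(1) _ assms(4,5)] assms(3) by (simp add: Q_iff)
  moreover have "pend tgt p = pstart q \<Longrightarrow> replace_at s (plen p + j) (pconcat p q) \<in> Q \<longleftrightarrow> pconcat p q \<in> Q"
    using replace_at_in_Q_iff[OF assms(1) path_pconcat, of p q "plen p + j"] assms(2-5)
    by (simp add: Q_iff pconcat_def plen_def nth_append)
  ultimately show ?thesis by (auto simp: amult_bvec replace_at_pconcat_right)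
qed

lemma D_rs_Leibniz_bvec:
  assumes "parallel r s" "p \<in> Q" "q \<in> Q"
  shows "D_rs r s (mul (bvec p) (bvec q) :: _ \<Rightarrow> 'k::field) =
    mul (D_rs r s (bvec p)) (bvec q) + mul (bvec p) (D_rs r s (bvec q))"
proof -
  let ?C = "pend tgt p = pstart q \<and> pconcat p q \<in> Q"
  have left: "mul (D_rs r s (bvec p)) (bvec q :: _ \<Rightarrow> 'k) = (\<Sum>i<plen p. if snd p ! i = r
      then (if ?C then bvec (replace_at s i (pconcat p q)) else 0) else 0)"
    unfolding D_rs_bvec[OF assms(2)] replace_sum_def amult_sum_left
    by (rule sum.cong) (simp_all add: amult_replace_at_bvec[OF assms])
  have right: "mul (bvec p) (D_rs r s (bvec q) :: _ \<Rightarrow> 'k) = (\<Sum>j<plen q. if snd q ! j = r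
      then (if ?C then bvec (replace_at s (plen p + j) (pconcat p q)) else 0) else 0)"
    unfolding D_rs_bvec[OF assms(3)] replace_sum_def amult_sum_right
    by (rule sum.cong) (simp_all add: amult_bvec_replace_at[OF assms])
  show ?thesis
  proof (cases ?C)
    case True
    then show ?thesis by (simp add: left right amult_bvec D_rs_bvec replace_sum_pconcat cong: if_cong)
  next
    case False
    then show ?thesis
      by (simp only: left right amult_bvec if_not_P[OF False] if_False if_cancel sum.neutral_const add_0
          linear_on_Alg_zero[OF linear_on_Alg_D_rs] cong: if_cong)
  qed
qed

lemma D_rs_in_Der:
  assumes rs: "parallel r s" shows "(D_rs r s :: ('v,'e,'k::field) qmap) \<in> Der\<^sub>A"
proof (rule DerI)
  show "D_rs r s x \<in> \<A>" if "x \<in> \<A>" for x :: "_ \<Rightarrow> 'k"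
    using that unfolding D_rs_def by (simp add: sum_in_Alg replace_sum_in_Alg[OF rs])
  show "D_rs r s (mul x y) = mul (D_rs r s x) y + mul x (D_rs r s y)" if "x \<in> \<A>" "y \<in> \<A>" for x y :: "_ \<Rightarrow> 'k"
    using Leibniz_from_basis[OF linear_on_Alg_D_rs D_rs_Leibniz_bvec[OF rs] that] .
qed (simp_all add: D_rs_def linear_on_Alg_D_rs)

lemma D_rs_ev: "v \<in> V \<Longrightarrow> (D_rs r s (ev v) :: _ \<Rightarrow> 'k::field) = 0"
proof -
  assume "v \<in> V"
  moreover have "(replace_sum r s (vpath v) :: _ \<Rightarrow> 'k) = 0" by (simp add: replace_sum_def plen_def vpath_def)
  ultimately show ?thesis by (simp add: ev_def D_rs_bvec vpath_in_Q_iff)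
qed

lemma D_rs_arr:
  assumes rs: "parallel r s" and e: "e \<in> E"
  shows "(D_rs r s (arr e) :: _ \<Rightarrow> 'k::field) = (if e = r then bvec s else 0)"
proof -
  have "(replace_sum r s (apath src e) :: _ \<Rightarrow> 'k) = (if e = r then bvec (replace_at s 0 (apath src e)) else 0)"
    by (simp add: replace_sum_def plen_def apath_def)
  moreover have "e = r \<Longrightarrow> replace_at s 0 (apath src e) = s"
    using rs by (cases s) (auto simp: replace_at_def apath_def parallel_def pstart_def)
  ultimately show ?thesis using apath_in_Q[OF e] by (simp add: arr_def D_rs_bvec)
qed

lemma Dbar_eq_D_rs:
  assumes rs: "parallel r s"
  shows "Dbar V E src tgt Ip r s = (D_rs r s :: ('v,'e,'k::field) qmap)"
  unfolding Dbar_def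
proof (rule the_equality)
  let ?D = "D_rs r s :: ('v,'e,'k) qmap"
  have "\<forall>v\<in>V. ?D (bvec (vpath v)) = 0" by (simp add: ev_def[symmetric] D_rs_ev)
  moreover have "?D (bvec (apath src r)) = bvec s"
    using rs by (simp add: arr_def[symmetric] D_rs_arr[OF rs] parallel_def)
  moreover have "\<forall>e\<in>E. e \<noteq> r \<longrightarrow> ?D (bvec (apath src e)) = 0"
    by (simp add: arr_def[symmetric] D_rs_arr[OF rs])
  ultimately show "?D \<in> Der\<^sub>A \<and> (\<forall>v\<in>V. ?D (bvec (vpath v)) = 0) \<and>
      ?D (bvec (apath src r)) = bvec s \<and> (\<forall>e\<in>E. e \<noteq> r \<longrightarrow> ?D (bvec (apath src e)) = 0)"
    using D_rs_in_Der[OF rs] by blast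
next
  fix D :: "('v,'e,'k) qmap"
  assume D: "D \<in> Der\<^sub>A \<and> (\<forall>v\<in>V. D (bvec (vpath v)) = 0) \<and>
    D (bvec (apath src r)) = bvec s \<and> (\<forall>e\<in>E. e \<noteq> r \<longrightarrow> D (bvec (apath src e)) = 0)"
  have "D - D_rs r s = 0"
  proof (rule Der_eq_zeroI)
    show "D - D_rs r s \<in> Der\<^sub>A"
      using D D_rs_in_Der[OF rs] by (intro DS.subspace_diff[OF subspace_Der]) auto
    show "(D - D_rs r s) (ev v) = 0" if "v \<in> V" for v
      using D D_rs_ev[OF that, where 'k='k] that by (simp add: ev_def)
    show "(D - D_rs r s) (arr e) = 0" if "e \<in> E" for e
      using D D_rs_arr[OF rs that, where 'k='k] that by (auto simp: arr_def)
  qed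
  then show "D = D_rs r s" by simp
qed

section \<open>Bases of the derivations and of the inner derivations\<close>

definition parallel_pairs :: "('e \<times> ('v,'e) qpath) set" where
  "parallel_pairs = {(r, s). parallel r s}"

definition Q_pos :: "('v,'e) qpath set" where
  "Q_pos = {q \<in> Q. snd q \<noteq> []}"

lemma finite_parallel_pairs: "finite parallel_pairs"
proof -
  have "parallel_pairs \<subseteq> E \<times> Q" by (auto simp: parallel_pairs_def parallel_def)
  then show ?thesis using finite_E finite_Q by (meson finite_SigmaI finite_subset)
qed

lemma finite_Q_pos: "finite Q_pos"
  using finite_Q by (simp add: Q_pos_def)

lemma Q_pos_subset: "Q_pos \<subseteq> Q"
  by (auto simp: Q_pos_def)

abbreviation "B\<^sub>2 \<equiv> (\<lambda>(r, s). D_rs r s) ` parallel_pairs"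

lemma B2bar_eq_image_D_rs: "(B2bar V E src tgt Ip :: ('v,'e,'k::field) qmap set) = B\<^sub>2"
proof (rule set_eqI)
  fix D :: "('v,'e,'k) qmap"
  have "D \<in> B2bar V E src tgt Ip \<longleftrightarrow> (\<exists>r s. parallel r s \<and> D = Dbar V E src tgt Ip r s)"
    unfolding B2bar_def parallel_def by blast
  also have "\<dots> \<longleftrightarrow> (\<exists>r s. parallel r s \<and> D = D_rs r s)"
    using Dbar_eq_D_rs by metis
  also have "\<dots> \<longleftrightarrow> D \<in> B\<^sub>2"
    by (auto simp: parallel_pairs_def)
  finally show "D \<in> B2bar V E src tgt Ip \<longleftrightarrow> D \<in> B\<^sub>2" .
qed

lemma Der_arr_support:
  assumes D: "D \<in> Der\<^sub>A" and vertices: "\<And>v. v \<in> V \<Longrightarrow> D (ev v) = 0" and e: "e \<in> E"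
    and nonzero: "D (arr e) t \<noteq> 0"
  shows "parallel e t"
proof -
  have A: "D (arr e) \<in> \<A>" using DerD(2)[OF D arr_in_Alg[OF e]] .
  have "D (arr e) = mul (D (ev (src e))) (arr e) + mul (ev (src e)) (D (arr e))"
    using DerD(4)[OF D ev_in_Alg[OF src_in_V[OF e]] arr_in_Alg[OF e]] by (simp only: amult_ev_src_arr[OF e])
  then have "D (arr e) t = mul (ev (src e)) (D (arr e)) t"
    using vertices[OF src_in_V[OF e]] by simp
  then have "pstart t = src e" using nonzero amult_ev_left[OF A] by (auto split: if_splits)
  have "D (arr e) = mul (D (arr e)) (ev (tgt e)) + mul (arr e) (D (ev (tgt e)))"
    using DerD(4)[OF D arr_in_Alg[OF e] ev_in_Alg[OF tgt_in_V[OF e]]] by (simp only: amult_arr_ev_tgt[OF e])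
  then have "D (arr e) t = mul (D (arr e)) (ev (tgt e)) t"
    using vertices[OF tgt_in_V[OF e]] by simp
  then have "pend tgt t = tgt e" using nonzero amult_ev_right[OF A] by (auto split: if_splits)
  moreover have "t \<in> Q" using nonzero AlgD[OF A] by blast
  ultimately show ?thesis using e \<open>pstart t = src e\<close> by (simp add: parallel_def)
qed

lemma Der_vanishing_on_vertices_in_span:
  assumes D: "(D :: ('v,'e,'k::field) qmap) \<in> Der\<^sub>A" and vertices: "\<And>v. v \<in> V \<Longrightarrow> D (ev v) = 0"
  shows "D \<in> DS.span B\<^sub>2"
proof -
  define D' :: "('v,'e,'k) qmap" where
    "D' = (\<Sum>x\<in>parallel_pairs. dscale (D (arr (fst x)) (snd x)) (D_rs (fst x) (snd x)))"
  have "D' \<in> DS.span B\<^sub>2"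
    unfolding D'_def by (intro DS.span_sum DS.span_scale DS.span_base) force
  moreover have "D' \<in> Der\<^sub>A"
    unfolding D'_def using D_rs_in_Der
    by (intro DS.subspace_sum[OF subspace_Der] DS.subspace_scale[OF subspace_Der])
      (auto simp: parallel_pairs_def)
  moreover have "D' (arr e) = D (arr e)" if e: "e \<in> E" for e
  proof
    fix t
    have "D' (arr e) t = (\<Sum>x\<in>parallel_pairs. if x = (e, t) then D (arr e) t else 0)"
      unfolding D'_def sum_fun_apply
    proof (rule sum.cong[OF refl])
      fix x assume "x \<in> parallel_pairs"
      then show "dscale (D (arr (fst x)) (snd x)) (D_rs (fst x) (snd x)) (arr e) t =
          (if x = (e, t) then D (arr e) t else 0)"
        using e by (cases x) (auto simp: parallel_pairs_def dscale_apply ascale_apply D_rs_arr bvec_apply)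
    qed
    also have "\<dots> = (if (e, t) \<in> parallel_pairs then D (arr e) t else 0)"
      by (simp add: finite_parallel_pairs)
    also have "\<dots> = D (arr e) t"
      using Der_arr_support[OF D vertices e, of t] by (auto simp: parallel_pairs_def)
    finally show "D' (arr e) t = D (arr e) t" .
  qed
  moreover have "D' (ev v) = 0" if "v \<in> V" for v
    unfolding D'_def using that by (simp add: sum_fun_apply dscale_apply D_rs_ev fun_eq_iff ascale_apply)
  ultimately have "D - D' = 0"
    using vertices by (intro Der_eq_zeroI DS.subspace_diff[OF subspace_Der] D) auto
  with \<open>D' \<in> DS.span B\<^sub>2\<close> show ?thesis by simp
qed

lemma Der_ev_apply:
  assumes D: "D \<in> Der\<^sub>A" and z: "z \<in> V"
  shows "D (ev z) t = (if pend tgt t = z then D (ev z) t else 0) + (if pstart t = z then D (ev z) t else 0)"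
proof -
  have "D (ev z) = mul (D (ev z)) (ev z) + mul (ev z) (D (ev z))"
    using DerD(4)[OF D ev_in_Alg[OF z] ev_in_Alg[OF z]] by (simp only: amult_ev_ev[OF z])
  from fun_cong[OF this, of t]
  have "D (ev z) t = mul (D (ev z)) (ev z) t + mul (ev z) (D (ev z)) t"
    by (simp only: plus_fun_apply)
  then show ?thesis
    unfolding amult_ev_right[OF DerD(2)[OF D ev_in_Alg[OF z]]] amult_ev_left[OF DerD(2)[OF D ev_in_Alg[OF z]]] .
qed

lemma Der_ev_apply_trivial:
  assumes D: "D \<in> Der\<^sub>A" and z: "z \<in> V" and "snd t = []"
  shows "D (ev z) t = 0"
proof -
  have "pstart t = pend tgt t" using \<open>snd t = []\<close> by (cases t) (simp add: pstart_def pend_def)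
  show ?thesis
  proof (cases "pstart t = z")
    case True
    then have "D (ev z) t = D (ev z) t + D (ev z) t"
      using Der_ev_apply[OF D z, of t] \<open>pstart t = pend tgt t\<close> by simp
    then show ?thesis by (metis add_cancel_left_right)
  next
    case False
    with \<open>pstart t = pend tgt t\<close> show ?thesis by (subst Der_ev_apply[OF D z]) simp
  qed
qed

lemma Der_ev_apply_neq:
  assumes D: "D \<in> Der\<^sub>A" and "u \<in> V" "z \<in> V" "u \<noteq> z"
  shows "(if pend tgt t = z then D (ev u) t else 0) + (if pstart t = u then D (ev z) t else 0) = 0"
proof -
  have "0 = mul (D (ev u)) (ev z) + mul (ev u) (D (ev z))"
    using DerD(4)[OF D ev_in_Alg[OF \<open>u \<in> V\<close>] ev_in_Alg[OF \<open>z \<in> V\<close>]]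
    by (simp only: amult_ev_ev_neq[OF \<open>u \<noteq> z\<close>] linear_on_Alg_zero[OF DerD(3)[OF D]])
  from fun_cong[OF this, of t]
  have "0 = mul (D (ev u)) (ev z) t + mul (ev u) (D (ev z)) t"
    by (simp only: plus_fun_apply zero_fun_apply)
  then show ?thesis
    unfolding amult_ev_right[OF DerD(2)[OF D ev_in_Alg[OF \<open>u \<in> V\<close>]]]
      amult_ev_left[OF DerD(2)[OF D ev_in_Alg[OF \<open>z \<in> V\<close>]]] by (rule sym)
qed

text \<open>By acyclicity a nontrivial path \<open>t \<in> Q\<close> has distinct ends, so \<open>D(e\<^sub>z)\<close> has at \<open>t\<close> only the
  coefficients \<open>\<plusminus>D(e\<^bsub>h(t)\<^esub>)(t)\<close>, exactly those of \<open>ad w (e\<^sub>z)\<close> for the following \<open>w\<close>.\<close>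

definition inner_part :: "('v,'e,'k::field) qmap \<Rightarrow> ('v,'e) qpath \<Rightarrow> 'k" where
  "inner_part D = (\<lambda>q. if q \<in> Q \<and> snd q \<noteq> [] then D (ev (pend tgt q)) q else 0)"

lemma inner_part_in_Alg: "inner_part D \<in> \<A>"
  by (simp add: inner_part_def Alg_iff)

lemma Der_ev_eq_ad_inner_part:
  assumes D: "D \<in> Der\<^sub>A" and z: "z \<in> V"
  shows "D (ev z) t = ad (inner_part D) (ev z) t"
proof -
  have ad: "ad (inner_part D) (ev z) t =
      (if pend tgt t = z then inner_part D t else 0) - (if pstart t = z then inner_part D t else 0)"
    by (rule ad_ev_apply[OF inner_part_in_Alg z])
  consider "t \<notin> Q" | "t \<in> Q" "snd t = []" | "t \<in> Q" "snd t \<noteq> []" by blast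
  then show ?thesis
  proof cases
    case 1
    then show ?thesis using ad AlgD[OF DerD(2)[OF D ev_in_Alg[OF z]]] by (simp add: inner_part_def)
  next
    case 2
    then show ?thesis using ad Der_ev_apply_trivial[OF D z, of t] by (simp add: inner_part_def)
  next
    case 3
    have ne: "pstart t \<noteq> pend tgt t" by (rule Q_pstart_neq_pend[OF 3])
    have w: "inner_part D t = D (ev (pend tgt t)) t" using 3 by (simp add: inner_part_def)
    consider "z = pend tgt t" | "z = pstart t" | "z \<noteq> pend tgt t" "z \<noteq> pstart t" by blast
    then show ?thesis
    proof cases
      case 2
      have "D (ev (pstart t)) t + D (ev (pend tgt t)) t = 0"
        using Der_ev_apply_neq[OF D Q_pstart_in_V[OF \<open>t \<in> Q\<close>] Q_pend_in_V[OF \<open>t \<in> Q\<close>] ne, of t] by simp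
      then have "D (ev z) t = - D (ev (pend tgt t)) t" using 2 by (simp add: eq_neg_iff_add_eq_0)
      moreover have "ad (inner_part D) (ev z) t = - inner_part D t" using ad ne 2 by simp
      ultimately show ?thesis using w by simp
    next
      case 3
      then show ?thesis using ad Der_ev_apply[OF D z, of t] by simp
    qed (use ad w ne in simp)
  qed
qed

lemma sum_Q_pos_apply: "(\<Sum>q\<in>Q_pos. ascale (c q) (bvec q)) t = (if t \<in> Q_pos then c t else (0::'k::field))"
proof -
  have "(\<Sum>q\<in>Q_pos. ascale (c q) (bvec q)) t = (\<Sum>q\<in>Q_pos. if q = t then c q else 0)"
    by (auto simp: sum_fun_apply ascale_apply bvec_apply intro!: sum.cong)
  also have "\<dots> = (if t \<in> Q_pos then c t else 0)" using finite_Q_pos by simp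
  finally show ?thesis .
qed

abbreviation "ad_Q_pos \<equiv> (\<lambda>q. ad (bvec q)) ` Q_pos"

lemma ad_in_span_ad_Q_pos:
  assumes w: "w \<in> \<A>" and trivial: "\<And>q. snd q = [] \<Longrightarrow> w q = 0"
  shows "ad w \<in> DS.span ad_Q_pos"
proof -
  have "w = (\<Sum>q\<in>Q_pos. ascale (w q) (bvec q))"
    unfolding fun_eq_iff sum_Q_pos_apply using AlgD[OF w] trivial by (auto simp: Q_pos_def)
  then have "ad w = ad (\<Sum>q\<in>Q_pos. ascale (w q) (bvec q))" by (rule arg_cong)
  also have "\<dots> = (\<Sum>q\<in>Q_pos. dscale (w q) (ad (bvec q)))"
    by (simp only: ad_sum ad_ascale)
  also have "\<dots> \<in> DS.span ad_Q_pos"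
    by (intro DS.span_sum DS.span_scale DS.span_base) blast
  finally show ?thesis .
qed

lemma Der_subset_span: "(Der\<^sub>A :: ('v,'e,'k::field) qmap set) \<subseteq> DS.span (B\<^sub>2 \<union> ad_Q_pos)"
proof
  fix D :: "('v,'e,'k) qmap" assume D: "D \<in> Der\<^sub>A"
  have "D - ad (inner_part D) \<in> DS.span B\<^sub>2"
  proof (rule Der_vanishing_on_vertices_in_span)
    show "D - ad (inner_part D) \<in> Der\<^sub>A"
      using D ad_in_Der[OF inner_part_in_Alg] by (intro DS.subspace_diff[OF subspace_Der])
    show "(D - ad (inner_part D)) (ev v) = 0" if "v \<in> V" for v
      using Der_ev_eq_ad_inner_part[OF D that] by (simp add: fun_eq_iff)
  qed
  moreover have "ad (inner_part D) \<in> DS.span ad_Q_pos"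
    by (rule ad_in_span_ad_Q_pos[OF inner_part_in_Alg]) (simp add: inner_part_def)
  ultimately have "(D - ad (inner_part D)) + ad (inner_part D) \<in> DS.span (B\<^sub>2 \<union> ad_Q_pos)"
    using DS.span_mono[of B\<^sub>2 "B\<^sub>2 \<union> ad_Q_pos"] DS.span_mono[of ad_Q_pos "B\<^sub>2 \<union> ad_Q_pos"]
    by (intro DS.span_add) auto
  then show "D \<in> DS.span (B\<^sub>2 \<union> ad_Q_pos)" by simp
qed

lemma Q_pos_coeffs_eq_zero:
  fixes c :: "('v,'e) qpath \<Rightarrow> 'k::field"
  assumes "\<And>z. z \<in> V \<Longrightarrow> ad (\<Sum>q\<in>Q_pos. ascale (c q) (bvec q)) (ev z) = 0"
  shows "\<forall>q\<in>Q_pos. c q = 0"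
proof
  fix t assume t: "t \<in> Q_pos"
  let ?w = "\<Sum>q\<in>Q_pos. ascale (c q) (bvec q)"
  have w: "?w \<in> \<A>" using Q_pos_subset by (intro sum_in_Alg) auto
  have "t \<in> Q" "snd t \<noteq> []" using t by (auto simp: Q_pos_def)
  then have "ad ?w (ev (pend tgt t)) t = ?w t"
    using ad_ev_apply[OF w Q_pend_in_V[OF \<open>t \<in> Q\<close>], of t] Q_pstart_neq_pend by simp
  then show "c t = 0" using assms[OF Q_pend_in_V[OF \<open>t \<in> Q\<close>]] t by (simp add: sum_Q_pos_apply)
qed

definition der_family :: "('e \<times> ('v,'e) qpath) + ('v,'e) qpath \<Rightarrow> ('v,'e,'k::field) qmap" where
  "der_family i = (case i of Inl (r, s) \<Rightarrow> D_rs r s | Inr q \<Rightarrow> ad (bvec q))"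

definition inn_family :: "'v + ('v,'e) qpath \<Rightarrow> ('v,'e,'k::field) qmap" where
  "inn_family i = (case i of Inl v \<Rightarrow> ad (ev v) | Inr q \<Rightarrow> ad (bvec q))"

lemma ad_sum_Q_pos: "(\<Sum>q\<in>Q_pos. dscale (c q) (ad (bvec q))) = ad (\<Sum>q\<in>Q_pos. ascale (c q) (bvec q))"
  by (simp only: ad_sum ad_ascale)

text \<open>Evaluating a vanishing combination at the vertices kills the \<open>D\<^sub>r\<^sub>,\<^sub>s\<close> and leaves an inner
  derivation, whose coefficients vanish; evaluating the rest at \<open>r\<close> then reads off the coefficient
  of \<open>D\<^sub>r\<^sub>,\<^sub>s\<close> at \<open>s\<close>.\<close>

lemma der_family_independent:
  assumes "(\<Sum>i\<in>parallel_pairs <+> Q_pos. dscale (c i) (der_family i :: ('v,'e,'k::field) qmap)) = 0"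
  shows "\<forall>i\<in>parallel_pairs <+> Q_pos. c i = 0"
proof -
  define S :: "('v,'e,'k) qmap" where "S = (\<Sum>x\<in>parallel_pairs. dscale (c (Inl x)) (D_rs (fst x) (snd x)))"
  define w :: "_ \<Rightarrow> 'k" where "w = (\<Sum>q\<in>Q_pos. ascale (c (Inr q)) (bvec q))"
  have split: "S + ad w = 0"
    using assms unfolding S_def w_def ad_sum_Q_pos[symmetric]
    by (simp add: sum.Plus finite_parallel_pairs finite_Q_pos der_family_def o_def case_prod_beta)
  have "S (ev z) = 0" if "z \<in> V" for z
    using that by (simp add: S_def sum_fun_apply dscale_apply D_rs_ev fun_eq_iff ascale_apply)
  then have "ad w (ev z) = 0" if "z \<in> V" for z
    using fun_cong[OF split, of "ev z"] that by simp
  then have Q_pos: "\<forall>q\<in>Q_pos. c (Inr q) = 0"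
    unfolding w_def by (rule Q_pos_coeffs_eq_zero)
  then have "S = 0" using split by (simp add: w_def ad_zero)
  have "c (Inl (r, s)) = 0" if rs: "(r, s) \<in> parallel_pairs" for r s
  proof -
    have r: "r \<in> E" using rs by (simp add: parallel_pairs_def parallel_def)
    have "0 = S (arr r) s" using \<open>S = 0\<close> by simp
    also have "\<dots> = (\<Sum>y\<in>parallel_pairs. if y = (r, s) then c (Inl y) else 0)"
      unfolding S_def sum_fun_apply
    proof (rule sum.cong[OF refl])
      fix y assume "y \<in> parallel_pairs"
      then show "dscale (c (Inl y)) (D_rs (fst y) (snd y)) (arr r) s = (if y = (r, s) then c (Inl y) else 0)"
        using r by (cases y) (auto simp: parallel_pairs_def dscale_apply ascale_apply D_rs_arr bvec_apply)
    qed
    also have "\<dots> = c (Inl (r, s))" using rs finite_parallel_pairs by simp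
    finally show ?thesis by simp
  qed
  with Q_pos show ?thesis by auto
qed

lemma connected_quiver_const:
  assumes "connected_quiver V E src tgt" and "\<And>e. e \<in> E \<Longrightarrow> f (src e) = f (tgt e)"
    and "u \<in> V" "w \<in> V"
  shows "f u = f w"
proof -
  have "(u, w) \<in> ({(src e, tgt e) | e. e \<in> E} \<union> {(tgt e, src e) | e. e \<in> E})\<^sup>*"
    using assms(1,3,4) unfolding connected_quiver_def by blast
  then show ?thesis
    by (induction rule: rtrancl_induct) (use assms(2) in auto)
qed

lemma ad_vertex_supported_arr_apath:
  assumes "a \<in> \<A>" "vertex_supported a" "e \<in> E"
  shows "ad a (arr e) (apath src e) = a (vpath (src e)) - a (vpath (tgt e))"
  using assms apath_in_Q[OF assms(3)]
  by (simp add: ad_def amult_vertex_supported_left amult_vertex_supported_right arr_def bvec_apply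
      pstart_def apath_def pend_def)

text \<open>The vertex part \<open>a = \<Sum>\<^sub>v c\<^sub>v e\<^sub>v\<close> of a vanishing combination commutes with all \<open>e\<^sub>z\<close>, so its path
  part vanishes as for \<open>der_family\<close>. Then \<open>ad a = 0\<close> makes \<open>v \<mapsto> c\<^sub>v\<close> constant along arrows, hence
  constant by connectivity, hence zero because \<open>c\<^sub>v\<^sub>0 = 0\<close>.\<close>

lemma inn_family_independent:
  assumes conn: "connected_quiver V E src tgt" and v0: "v0 \<in> V"
    and sum: "(\<Sum>i\<in>(V - {v0}) <+> Q_pos. dscale (c i) (inn_family i :: ('v,'e,'k::field) qmap)) = 0"
  shows "\<forall>i\<in>(V - {v0}) <+> Q_pos. c i = 0"
proof -
  define a :: "_ \<Rightarrow> 'k" where "a = (\<Sum>v\<in>V - {v0}. ascale (c (Inl v)) (ev v))"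
  define w :: "_ \<Rightarrow> 'k" where "w = (\<Sum>q\<in>Q_pos. ascale (c (Inr q)) (bvec q))"
  have a_vpath: "a (vpath v) = (if v \<in> V - {v0} then c (Inl v) else 0)" for v
    using finite_V by (simp add: a_def sum_ev_apply vpath_def)
  have a: "a \<in> \<A>" "vertex_supported a"
    unfolding a_def using finite_V by (auto intro!: sum_in_Alg simp: vertex_supported_def sum_ev_apply)
  have split: "ad a + ad w = 0"
    using sum unfolding a_def w_def ad_sum_Q_pos[symmetric]
    by (simp add: sum.Plus finite_V finite_Q_pos inn_family_def o_def ad_sum ad_ascale)
  have "ad w (ev z) = 0" if "z \<in> V" for z
    using fun_cong[OF split, of "ev z"] ad_vertex_supported_ev[OF a that] by simp
  then have Q_pos: "\<forall>q\<in>Q_pos. c (Inr q) = 0"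
    unfolding w_def by (rule Q_pos_coeffs_eq_zero)
  then have "ad a = 0" using split by (simp add: w_def ad_zero)
  then have "a (vpath (src e)) = a (vpath (tgt e))" if "e \<in> E" for e
    using ad_vertex_supported_arr_apath[OF a that] by simp
  then have "a (vpath v) = a (vpath v0)" if "v \<in> V" for v
    using connected_quiver_const[OF conn, of "\<lambda>v. a (vpath v)", OF _ that v0] by blast
  then have "c (Inl v) = 0" if "v \<in> V - {v0}" for v
    using that a_vpath[of v] a_vpath[of v0] by simp
  with Q_pos show ?thesis by auto
qed

text \<open>\<open>ad e\<^sub>v\<^sub>0\<close> is redundant because \<open>\<Sum>\<^sub>v e\<^sub>v = 1\<close> is central.\<close>

lemma Inn_subset_span:
  assumes v0: "v0 \<in> V"
  shows "(Inn V E src tgt Ip :: ('v,'e,'k::field) qmap set) \<subseteq> DS.span (inn_family ` ((V - {v0}) <+> Q_pos))"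
proof -
  let ?S = "DS.span (inn_family ` ((V - {v0}) <+> Q_pos) :: ('v,'e,'k) qmap set)"
  have Q_pos_in: "ad (bvec q) \<in> ?S" if "q \<in> Q_pos" for q
    using that by (intro DS.span_base) (force simp: inn_family_def intro: image_eqI[where x="Inr q"])
  have vertex_in: "ad (ev v) \<in> ?S" if "v \<in> V - {v0}" for v
    using that by (intro DS.span_base) (force simp: inn_family_def intro: image_eqI[where x="Inl v"])
  have "(ad one :: ('v,'e,'k) qmap) = ad (ev v0) + (\<Sum>v\<in>V - {v0}. ad (ev v))"
    unfolding one_def ad_sum using finite_V v0 by (rule sum.remove)
  then have "ad (ev v0) = - (\<Sum>v\<in>V - {v0}. (ad (ev v) :: ('v,'e,'k) qmap))"
    by (simp add: ad_one eq_neg_iff_add_eq_0 add.commute)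
  moreover have "(\<Sum>v\<in>V - {v0}. (ad (ev v) :: ('v,'e,'k) qmap)) \<in> ?S"
    by (rule DS.span_sum) (rule vertex_in)
  ultimately have v0_in: "ad (ev v0) \<in> ?S" by (simp add: DS.span_neg)
  have "ad (bvec q) \<in> ?S" if q: "q \<in> Q" for q
  proof (cases "snd q = []")
    case True
    then have "(bvec q :: _ \<Rightarrow> 'k) = ev (fst q)" "fst q \<in> V"
      using q by (cases q; auto simp: ev_def vpath_def Q_iff is_path_def)+
    then show ?thesis using v0_in vertex_in[of "fst q"] by (cases "fst q = v0") auto
  qed (use q Q_pos_in in \<open>simp add: Q_pos_def\<close>)
  then have "ad a \<in> ?S" if "a \<in> \<A>" for a :: "_ \<Rightarrow> 'k"
    unfolding ad_basis_expansion[OF that] by (intro DS.span_sum DS.span_scale)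
  then show ?thesis by (auto simp: Inn_eq_image_ad)
qed

lemma dim_Der: "DS.dim (Der\<^sub>A :: ('v,'e,'k::field) qmap set) = card parallel_pairs + card Q_pos"
proof -
  have family: "der_family ` (parallel_pairs <+> Q_pos) = (B\<^sub>2 \<union> ad_Q_pos :: ('v,'e,'k) qmap set)"
    by (force simp: Plus_def der_family_def)
  have "DS.dim (Der\<^sub>A :: ('v,'e,'k) qmap set) = card (parallel_pairs <+> Q_pos)"
  proof (rule DS.dim_eq_card_of_basis_family)
    show "der_family ` (parallel_pairs <+> Q_pos) \<subseteq> (Der\<^sub>A :: ('v,'e,'k) qmap set)"
      by (auto simp: der_family_def parallel_pairs_def Q_pos_def intro!: D_rs_in_Der ad_in_Der)
  qed (use finite_parallel_pairs finite_Q_pos der_family_independent Der_subset_span family in auto)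
  then show ?thesis by (simp add: card_Plus finite_parallel_pairs finite_Q_pos)
qed

lemma dim_Inn:
  assumes "connected_quiver V E src tgt"
  shows "DS.dim (Inn V E src tgt Ip :: ('v,'e,'k::field) qmap set) = card V - 1 + card Q_pos"
proof -
  obtain v0 where v0: "v0 \<in> V" using assms by (auto simp: connected_quiver_def)
  have "DS.dim (Inn V E src tgt Ip :: ('v,'e,'k) qmap set) = card ((V - {v0}) <+> Q_pos)"
  proof (rule DS.dim_eq_card_of_basis_family)
    show "inn_family ` ((V - {v0}) <+> Q_pos) \<subseteq> (Inn V E src tgt Ip :: ('v,'e,'k) qmap set)"
      by (auto simp: Inn_eq_image_ad inn_family_def Q_pos_def)
  qed (use finite_V finite_Q_pos inn_family_independent[OF assms v0] Inn_subset_span[OF v0] in auto)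
  then show ?thesis using v0 by (simp add: card_Plus finite_V finite_Q_pos)
qed

lemma card_B2bar: "card (B2bar V E src tgt Ip :: ('v,'e,'k::field) qmap set) = card parallel_pairs"
proof -
  have "inj_on (\<lambda>(r, s). D_rs r s :: ('v,'e,'k) qmap) parallel_pairs"
  proof (rule inj_onI)
    fix x y assume "x \<in> parallel_pairs" "y \<in> parallel_pairs"
      and "(\<lambda>(r, s). D_rs r s :: ('v,'e,'k) qmap) x = (\<lambda>(r, s). D_rs r s) y"
    then obtain r s r' s' where xy: "x = (r, s)" "y = (r', s')" and rs: "parallel r s" "parallel r' s'"
      and eq: "(D_rs r s :: ('v,'e,'k) qmap) = D_rs r' s'"
      by (auto simp: parallel_pairs_def)
    have "bvec s = (if r = r' then bvec s' else (0 :: _ \<Rightarrow> 'k))"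
      using fun_cong[OF eq, of "arr r"] rs by (simp add: D_rs_arr parallel_def)
    then have "r = r' \<and> s = s'"
      by (metis (full_types) bvec_apply one_neq_zero zero_fun_apply)
    with xy show "x = y" by simp
  qed
  then show ?thesis by (simp add: B2bar_eq_image_D_rs card_image)
qed

end

theorem corollary4p6:
  fixes V :: "'v set" and E :: "'e set" and src tgt :: "'e \<Rightarrow> 'v"
    and Ip :: "('v,'e) qpath set"
  assumes "finite_quiver V E src tgt"
    and "connected_quiver V E src tgt"
    and "path_ideal_in_R2 V E src tgt Ip"
    and "complete_alg V E src tgt Ip"
    and "acyclic_alg V E src tgt Ip"
  shows "hh1_dim TYPE('k::field) V E src tgt Ip
           = int (card (B2bar V E src tgt Ip :: ('v,'e,'k) qmap set)) + 1 - int (card V)"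
proof -
  interpret quiver_path_algebra V E src tgt Ip
    using assms by unfold_locales
  have "card V \<ge> 1"
    using assms(2) finite_V by (auto simp: connected_quiver_def Suc_le_eq card_gt_0_iff)
  then show ?thesis
    unfolding hh1_dim_def using dim_Der[where 'k='k] dim_Inn[OF assms(2), where 'k='k] card_B2bar[where 'k='k]
    by simp
qed

end
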